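(* If $S$ is a nilpotent right loop, then its group torsion $G_S$ is a solvable group.
   Context: A right loop is a set $S$ with binary operation $\circ$ and two-sided identity $1$ such that each equation $X\circ a=b$ has a unique solution. For $y,z\in S$, $f^S(y,z):S\to S$ sends $x$ to the unique $X$ with $X\circ(y\circ z)=(x\circ y)\circ z$; the group torsion $G_S\le\mathrm{Sym}(S)$ is generated by all $f^S(y,z)$. A congruence is an equivalence relation which is a right subloop of $S\times S$; an invariant right subloop is the class $T$ of $1$ under a congruence, $S/T=\{T\circ x\}$ with $(T\circ x)\circ(T\circ y)=T\circ(x\circ y)$. For congruences $\beta,\gamma$, $\gamma$ centralizes $\beta$ if there is a congruence $(\gamma|\beta)$ on the right loop $\beta\subseteq S\times S$ with: (i) $(x,y)(\gamma|\beta)(u,v)\Rightarrow x\gamma u$; (ii) for $(x,y)\in\beta$, $(u,v)\mapsto u$ is a bijection from the $(\gamma|\beta)$-class of $(x,y)$ to the $\gamma$-class of $x$; (iii) $(x,y)\in\gamma\Rightarrow(x,x)(\gamma|\beta)(y,y)$; (iv) $(x,y)(\gamma|\beta)(u,v)\Rightarrow(y,x)(\gamma|\beta)(v,u)$; (v) $(x,y)(\gamma|\beta)(u,v)$, $(y,z)(\gamma|\beta)(v,w)\Rightarrow(x,z)(\gamma|\beta)(u,w)$. The center $\mathcal Z(S)$ is the class of $1$ under the unique maximal congruence centralized by $S\times S$. $S$ is nilpotent if the series $\mathcal Z_0=\{1\}$, $\mathcal Z_1=\mathcal Z(S)$, $\mathcal Z_{i+1}/\mathcal Z_i=\mathcal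 Z(S/\mathcal Z_i)$ reaches $\mathcal Z_n=S$ for some $n$. *)

theory Defs
  imports "HOL-Algebra.Solvable_Groups" "HOL-Algebra.Bij"
begin

definition right_loop :: "'a set \<Rightarrow> ('a \<Rightarrow> 'a \<Rightarrow> 'a) \<Rightarrow> 'a \<Rightarrow> bool" where
  "right_loop S op e \<longleftrightarrow>
     e \<in> S \<and> (\<forall>x\<in>S. \<forall>y\<in>S. op x y \<in> S) \<and>
     (\<forall>x\<in>S. op e x = x \<and> op x e = x) \<and>
     (\<forall>a\<in>S. \<forall>b\<in>S. \<exists>!X. X \<in> S \<and> op X a = b)"

definition prod_op :: "('a \<Rightarrow> 'a \<Rightarrow> 'a) \<Rightarrow> 'a \<times> 'a \<Rightarrow> 'a \<times> 'a \<Rightarrow> 'a \<times> 'a" where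
  "prod_op op p q = (op (fst p) (fst q), op (snd p) (snd q))"

definition congruence :: "'a set \<Rightarrow> ('a \<Rightarrow> 'a \<Rightarrow> 'a) \<Rightarrow> 'a \<Rightarrow> 'a rel \<Rightarrow> bool" where
  "congruence S op e \<alpha> \<longleftrightarrow> equiv S \<alpha> \<and> right_loop \<alpha> (prod_op op) (e, e)"

text \<open>gamma centralizes beta (conditions (i)-(v)), with witness R = (gamma|beta).\<close>
definition centralizes :: "'a set \<Rightarrow> ('a \<Rightarrow> 'a \<Rightarrow> 'a) \<Rightarrow> 'a \<Rightarrow> 'a rel \<Rightarrow> 'a rel \<Rightarrow> bool" where
  "centralizes S op e \<gamma> \<beta> \<longleftrightarrow>
    (\<exists>R :: ('a \<times> 'a) rel.
       congruence \<beta> (prod_op op) (e, e) R \<and>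
       (\<forall>x y u v. ((x, y), (u, v)) \<in> R \<longrightarrow> (x, u) \<in> \<gamma>) \<and>
       (\<forall>p\<in>\<beta>. bij_betw fst (R `` {p}) (\<gamma> `` {fst p})) \<and>
       (\<forall>x y. (x, y) \<in> \<gamma> \<longrightarrow> ((x, x), (y, y)) \<in> R) \<and>
       (\<forall>x y u v. ((x, y), (u, v)) \<in> R \<longrightarrow> ((y, x), (v, u)) \<in> R) \<and>
       (\<forall>x y z u v w. ((x, y), (u, v)) \<in> R \<longrightarrow> ((y, z), (v, w)) \<in> R
          \<longrightarrow> ((x, z), (u, w)) \<in> R))"

definition center_cong :: "'a set \<Rightarrow> ('a \<Rightarrow> 'a \<Rightarrow> 'a) \<Rightarrow> 'a \<Rightarrow> 'a rel" where
  "center_cong S op e = (THE \<beta>. congruence S op e \<beta> \<and> centralizes S op e (S \<times> S) \<beta> \<and>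
      (\<forall>\<beta>'. congruence S op e \<beta>' \<and> centralizes S op e (S \<times> S) \<beta>' \<and> \<beta> \<subseteq> \<beta>' \<longrightarrow> \<beta>' = \<beta>))"

definition center :: "'a set \<Rightarrow> ('a \<Rightarrow> 'a \<Rightarrow> 'a) \<Rightarrow> 'a \<Rightarrow> 'a set" where
  "center S op e = center_cong S op e `` {e}"

definition inv_cong :: "'a set \<Rightarrow> ('a \<Rightarrow> 'a \<Rightarrow> 'a) \<Rightarrow> 'a \<Rightarrow> 'a set \<Rightarrow> 'a rel" where
  "inv_cong S op e T = (THE \<alpha>. congruence S op e \<alpha> \<and> \<alpha> `` {e} = T)"

definition quot_op :: "('a \<Rightarrow> 'a \<Rightarrow> 'a) \<Rightarrow> 'a rel \<Rightarrow> 'a set \<Rightarrow> 'a set \<Rightarrow> 'a set" where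
  "quot_op op \<alpha> A B = \<alpha> `` {op (SOME x. x \<in> A) (SOME y. y \<in> B)}"

fun upper_central :: "'a set \<Rightarrow> ('a \<Rightarrow> 'a \<Rightarrow> 'a) \<Rightarrow> 'a \<Rightarrow> nat \<Rightarrow> 'a set" where
  "upper_central S op e 0 = {e}"
| "upper_central S op e (Suc i) =
     (let \<alpha> = inv_cong S op e (upper_central S op e i)
      in \<Union> (center (S // \<alpha>) (quot_op op \<alpha>) (\<alpha> `` {e})))"

definition nilpotent_right_loop :: "'a set \<Rightarrow> ('a \<Rightarrow> 'a \<Rightarrow> 'a) \<Rightarrow> 'a \<Rightarrow> bool" where
  "nilpotent_right_loop S op e \<longleftrightarrow> (\<exists>n. upper_central S op e n = S)"

definition torsion_map :: "'a set \<Rightarrow> ('a \<Rightarrow> 'a \<Rightarrow> 'a) \<Rightarrow> 'a \<Rightarrow> 'a \<Rightarrow> 'a \<Rightarrow> 'a" where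
  "torsion_map S op y z = (\<lambda>x\<in>S. THE X. X \<in> S \<and> op X (op y z) = op (op x y) z)"

definition group_torsion :: "'a set \<Rightarrow> ('a \<Rightarrow> 'a \<Rightarrow> 'a) \<Rightarrow> ('a \<Rightarrow> 'a) set" where
  "group_torsion S op =
     generate (BijGroup S) {torsion_map S op y z | y z. y \<in> S \<and> z \<in> S}"

end

theory Submission
  imports Defs
begin

(* The abstract notions of the definitions (center via
   centralizing congruences, quotients, upper central series) are first identified
   with concrete ones; solvability then follows from a filtration argument.

   1. The center.  Cen is the set of elements that commute with everything and
      associate in every position.  The congruence zeta = {(c y, y) | c in Cen} is
      centralized by S x S, and every congruence centralized by S x S lies in zeta;
      hence center_cong S = zeta and center S = Cen.
   2. The upper central series.  Applying 1 to a quotient S/alpha shows that every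
      Z_i is the class of e under a congruence alpha_i (ucong i), and that Z_(i+1)
      consists of the elements central modulo alpha_i (centralmod).
   3. Compatibility.  Every torsion map f(y,z) preserves and reflects each congruence
      alpha and commutes modulo alpha with left multiplication by elements central
      modulo alpha.  Such "compatible" permutations form a subgroup of Sym(S), so every
      element of G_S is compatible.
   4. The filtration.  K(alpha) = {g in G_S | g x alpha x for all x} is a subgroup, and
      by 3 the commutator of two elements of K(alpha_(i+1)) lies in K(alpha_i).  Since
      K(alpha_n) = G_S when Z_n = S and K(alpha_0) = 1, the n-th derived subgroup of
      G_S is trivial. *)

locale rloop =
  fixes S :: "'a set" and op :: "'a \<Rightarrow> 'a \<Rightarrow> 'a" and e :: 'a
  assumes RL: "right_loop S op e"
begin

lemma e_in: "e \<in> S"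
  using RL by (simp add: right_loop_def)

lemma op_in [simp, intro]: "x \<in> S \<Longrightarrow> y \<in> S \<Longrightarrow> op x y \<in> S"
  using RL by (simp add: right_loop_def)

lemma e_left [simp]: "x \<in> S \<Longrightarrow> op e x = x"
  using RL by (simp add: right_loop_def)

lemma e_right [simp]: "x \<in> S \<Longrightarrow> op x e = x"
  using RL by (simp add: right_loop_def)

lemma right_div_ex1: "a \<in> S \<Longrightarrow> b \<in> S \<Longrightarrow> \<exists>!X. X \<in> S \<and> op X a = b"
  using RL by (simp add: right_loop_def)

definition rdiv :: "'a \<Rightarrow> 'a \<Rightarrow> 'a" where
  "rdiv b a = (THE X. X \<in> S \<and> op X a = b)"

lemma rdiv: assumes "a \<in> S" "b \<in> S" shows "rdiv b a \<in> S" "op (rdiv b a) a = b"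
  using theI'[OF right_div_ex1[OF assms]] unfolding rdiv_def by auto

lemma rdiv_unique: assumes "a \<in> S" "b \<in> S" "X \<in> S" "op X a = b" shows "X = rdiv b a"
  using right_div_ex1[OF assms(1,2)] rdiv[OF assms(1,2)] assms(3,4) by blast

lemma rcancel: assumes "X \<in> S" "Y \<in> S" "a \<in> S" "op X a = op Y a" shows "X = Y"
  using right_div_ex1[of a "op Y a"] assms by auto

lemma rdiv_self: "y \<in> S \<Longrightarrow> rdiv y y = e"
  using rdiv_unique[of y y e] e_in by simp

lemma rdiv_op: "x \<in> S \<Longrightarrow> a \<in> S \<Longrightarrow> rdiv (op x a) a = x"
  using rdiv_unique[of a "op x a" x] by simp

lemma sub_rl:
  assumes "A \<subseteq> S" "e \<in> A" "\<And>x y. x \<in> A \<Longrightarrow> y \<in> A \<Longrightarrow> op x y \<in> A"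
    "\<And>a b. a \<in> A \<Longrightarrow> b \<in> A \<Longrightarrow> rdiv b a \<in> A"
  shows "right_loop A op e"
  unfolding right_loop_def
proof (intro conjI ballI)
  fix a b assume a: "a \<in> A" and b: "b \<in> A"
  show "\<exists>!X. X \<in> A \<and> op X a = b"
  proof (rule ex1I[of _ "rdiv b a"])
    show "rdiv b a \<in> A \<and> op (rdiv b a) a = b" using assms(1,4) rdiv(2) a b by blast
    show "X = rdiv b a" if "X \<in> A \<and> op X a = b" for X
      using rdiv_unique that a b assms(1) by auto
  qed
qed (use assms in auto)

lemma sub_rdiv:
  assumes "A \<subseteq> S" "right_loop A op e" "a \<in> A" "b \<in> A"
  shows "rloop.rdiv A op b a = rdiv b a"
proof -
  interpret A: rloop A op e by (rule rloop.intro) (rule assms(2))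
  show ?thesis
    using rdiv_unique[of a b "A.rdiv b a"] A.rdiv[OF assms(3,4)] assms(1,3,4) by auto
qed

section \<open>Central elements\<close>

text \<open>The elements that commute with all elements and associate in every position.
  They will turn out to form the center of \<open>S\<close>; on them \<open>S\<close> behaves like an abelian group.\<close>

definition Cen :: "'a set" where
  "Cen = {c \<in> S. \<forall>x\<in>S. \<forall>y\<in>S. op c x = op x c \<and> op (op c x) y = op c (op x y)
     \<and> op (op x c) y = op x (op c y) \<and> op (op x y) c = op x (op y c)}"

lemma CenD: assumes "c \<in> Cen" "x \<in> S" "y \<in> S"
  shows "c \<in> S" "op c x = op x c" "op (op c x) y = op c (op x y)"
     "op (op x c) y = op x (op c y)" "op (op x y) c = op x (op y c)"
  using assms by (auto simp: Cen_def)

lemma Cen_S: "c \<in> Cen \<Longrightarrow> c \<in> S"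
  by (simp add: Cen_def)

lemma e_Cen: "e \<in> Cen"
  using e_in by (auto simp: Cen_def)

lemma Cen_mult: assumes c: "c \<in> Cen" and d: "d \<in> Cen" shows "op c d \<in> Cen"
proof -
  have cS: "c \<in> S" and dS: "d \<in> S" using c d by (auto simp: Cen_def)
  show ?thesis unfolding Cen_def
  proof (intro CollectI conjI ballI)
    show "op c d \<in> S" using cS dS by simp
    fix x y assume x: "x \<in> S" and y: "y \<in> S"
    have "op (op c d) x = op c (op d x)" using CenD(3)[OF c dS x] .
    also have "\<dots> = op c (op x d)" using CenD(2)[OF d x x] by simp
    also have "\<dots> = op (op c x) d" using CenD(3)[OF c x dS] by simp
    also have "\<dots> = op (op x c) d" using CenD(2)[OF c x x] by simp
    also have "\<dots> = op x (op c d)" using CenD(4)[OF c x dS] .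
    finally show "op (op c d) x = op x (op c d)" .
    have "op (op (op c d) x) y = op (op c (op d x)) y" using CenD(3)[OF c dS x] by simp
    also have "\<dots> = op c (op (op d x) y)" using CenD(3)[OF c _ y] dS x by simp
    also have "\<dots> = op c (op d (op x y))" using CenD(3)[OF d x y] by simp
    also have "\<dots> = op (op c d) (op x y)" using CenD(3)[OF c dS, of "op x y"] x y by simp
    finally show "op (op (op c d) x) y = op (op c d) (op x y)" .
    have "op (op x (op c d)) y = op (op (op x c) d) y" using CenD(4)[OF c x dS] by simp
    also have "\<dots> = op (op x c) (op d y)" using CenD(4)[OF d _ y, of "op x c"] x cS by simp
    also have "\<dots> = op x (op c (op d y))" using CenD(4)[OF c x, of "op d y"] dS y by simp
    also have "\<dots> = op x (op (op c d) y)" using CenD(3)[OF c dS y] by simp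
    finally show "op (op x (op c d)) y = op x (op (op c d) y)" .
    have "op (op x y) (op c d) = op (op (op x y) c) d" using CenD(4)[OF c _ dS, of "op x y"] x y by simp
    also have "\<dots> = op (op x (op y c)) d" using CenD(5)[OF c x y] by simp
    also have "\<dots> = op x (op (op y c) d)" using CenD(5)[OF d x, of "op y c"] y cS by simp
    also have "\<dots> = op x (op y (op c d))" using CenD(4)[OF c y dS] by simp
    finally show "op (op x y) (op c d) = op x (op y (op c d))" .
  qed
qed

definition cinv :: "'a \<Rightarrow> 'a" where
  "cinv c = rdiv e c"

lemma cinv: assumes c: "c \<in> Cen" shows "cinv c \<in> S" "op (cinv c) c = e" "op c (cinv c) = e"
proof -
  have cS: "c \<in> S" using c by (auto simp: Cen_def)
  show 1: "cinv c \<in> S" "op (cinv c) c = e" using rdiv[OF cS e_in] by (auto simp: cinv_def)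
  show "op c (cinv c) = e" using CenD(2)[OF c 1(1) e_in] 1 by simp
qed

lemma cinv_cancel: assumes c: "c \<in> Cen" and x: "x \<in> S"
  shows "op (op (cinv c) x) c = x" "op (op x (cinv c)) c = x"
proof -
  note c' = cinv[OF c]
  have "op (op (cinv c) x) c = op (cinv c) (op c x)"
    using CenD(5)[OF c c'(1) x] CenD(2)[OF c x x] by simp
  also have "\<dots> = op (op (cinv c) c) x" using CenD(4)[OF c c'(1) x] by simp
  finally show "op (op (cinv c) x) c = x" using c' x by simp
  show "op (op x (cinv c)) c = x" using CenD(5)[OF c x c'(1)] c' x by simp
qed

lemma cinv_Cen: assumes c: "c \<in> Cen" shows "cinv c \<in> Cen"
proof -
  have cS: "c \<in> S" using c by (rule Cen_S)
  define c' where "c' = cinv c"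
  have c'S: "c' \<in> S" using cinv[OF c] by (simp add: c'_def)
  note a1 = cinv_cancel(1)[OF c, folded c'_def] and a2 = cinv_cancel(2)[OF c, folded c'_def]
  text \<open>Each identity is checked after right multiplication by \<open>c\<close>, which is injective.\<close>
  have by_c: "P = Q" if "op P c = op Q c" "P \<in> S" "Q \<in> S" for P Q
    using rcancel[OF that(2,3) cS that(1)] .
  have move_c: "op (op u v) c = op (op u c) v" if "u \<in> S" "v \<in> S" for u v
    using CenD(5)[OF c that] CenD(2)[OF c that(2) that(2)] CenD(4)[OF c that] by simp
  show ?thesis unfolding c'_def[symmetric] Cen_def
  proof (intro CollectI conjI ballI)
    show "c' \<in> S" by fact
    fix x y assume x: "x \<in> S" and y: "y \<in> S"
    have xy: "op x y \<in> S" using x y by simp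
    have "op (op c' x) c = op (op x c') c" using a1[OF x] a2[OF x] by simp
    then show "op c' x = op x c'" by (rule by_c) (use c'S x in simp_all)
    have "op (op (op c' x) y) c = op (op c' (op x y)) c"
      using move_c[of "op c' x" y] a1[OF x] a1[OF xy] c'S x y by simp
    then show "op (op c' x) y = op c' (op x y)" by (rule by_c) (use c'S x y in simp_all)
    have "op (op (op x c') y) c = op (op x (op c' y)) c"
      using move_c[of "op x c'" y] a2[OF x] CenD(5)[OF c x, of "op c' y"] a1[OF y] c'S x y by simp
    then show "op (op x c') y = op x (op c' y)" by (rule by_c) (use c'S x y in simp_all)
    have "op (op (op x y) c') c = op (op x (op y c')) c"
      using a2[OF xy] CenD(5)[OF c x, of "op y c'"] a2[OF y] c'S y by simp
    then show "op (op x y) c' = op x (op y c')" by (rule by_c) (use c'S x y in simp_all)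
  qed
qed

lemma cinv_left: assumes c: "c \<in> Cen" and y: "y \<in> S" shows "op (cinv c) (op c y) = y"
  using CenD(4)[OF c cinv(1)[OF c] y] cinv[OF c] y by simp

lemma cinv_right: assumes c: "c \<in> Cen" and y: "y \<in> S" shows "op c (op (cinv c) y) = y"
  using CenD(4)[OF cinv_Cen[OF c] Cen_S[OF c] y] cinv[OF c] y by simp

lemma Cen_prod: assumes c: "c \<in> Cen" and d: "d \<in> Cen" and x: "x \<in> S" and y: "y \<in> S"
  shows "op (op c x) (op d y) = op (op c d) (op x y)"
proof -
  have dS: "d \<in> S" and xy: "op x y \<in> S" using Cen_S[OF d] x y by auto
  have "op (op c x) (op d y) = op c (op x (op d y))" by (rule CenD(3)[OF c x op_in[OF dS y]])
  also have "\<dots> = op c (op x (op y d))" by (metis CenD(2)[OF d y y])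
  also have "\<dots> = op c (op (op x y) d)" by (metis CenD(5)[OF d x y])
  also have "\<dots> = op c (op d (op x y))" by (metis CenD(2)[OF d xy xy])
  also have "\<dots> = op (op c d) (op x y)" by (metis CenD(3)[OF c dS xy])
  finally show ?thesis .
qed

lemma Cen_div: assumes c: "c \<in> Cen" and d: "d \<in> Cen" and a: "a \<in> S" and b: "b \<in> S"
  shows "rdiv (op d b) (op c a) = op (op d (cinv c)) (rdiv b a)"
proof -
  have k: "op d (cinv c) \<in> Cen" using Cen_mult[OF d cinv_Cen[OF c]] .
  note r = rdiv[OF a b]
  have kc: "op (op d (cinv c)) c = d"
    using CenD(5)[OF c Cen_S[OF d] cinv(1)[OF c]] cinv(2)[OF c] Cen_S[OF d] by simp
  have "op (op (op d (cinv c)) (rdiv b a)) (op c a) = op d b"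
    using Cen_prod[OF k c r(1) a] kc r(2) by simp
  then show ?thesis
    by (rule rdiv_unique[symmetric, rotated 3]) (use a b r Cen_S[OF c] Cen_S[OF d] Cen_S[OF k] in auto)
qed

lemma Cen_rcancel: assumes "c \<in> Cen" "d \<in> Cen" "y \<in> S" "op c y = op d y" shows "c = d"
  by (rule rcancel[OF Cen_S[OF assms(1)] Cen_S[OF assms(2)] assms(3,4)])

lemma Cen_lcancel: assumes "c \<in> Cen" "y \<in> S" "v \<in> S" "op c y = op c v" shows "y = v"
  by (metis cinv_left[OF assms(1,2)] cinv_left[OF assms(1,3)] assms(4))

end

lemma prod_rloop: assumes "rloop S op e" shows "rloop (S \<times> S) (prod_op op) (e, e)"
proof -
  interpret rloop S op e by fact
  show ?thesis unfolding rloop_def right_loop_def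
  proof (intro conjI ballI)
    fix a b assume a: "a \<in> S \<times> S" and b: "b \<in> S \<times> S"
    show "\<exists>!X. X \<in> S \<times> S \<and> prod_op op X a = b"
    proof (rule ex1I[of _ "(rdiv (fst b) (fst a), rdiv (snd b) (snd a))"])
      show "(rdiv (fst b) (fst a), rdiv (snd b) (snd a)) \<in> S \<times> S \<and>
          prod_op op (rdiv (fst b) (fst a), rdiv (snd b) (snd a)) a = b"
        using a b rdiv[of "fst a" "fst b"] rdiv[of "snd a" "snd b"] by (auto simp: prod_op_def)
      show "X = (rdiv (fst b) (fst a), rdiv (snd b) (snd a))" if "X \<in> S \<times> S \<and> prod_op op X a = b" for X
        using that a b rdiv_unique[of "fst a" "fst b" "fst X"] rdiv_unique[of "snd a" "snd b" "snd X"]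
        by (auto simp: prod_op_def)
    qed
  qed (use e_in in \<open>auto simp: prod_op_def\<close>)
qed

lemma prod_rdiv:
  assumes "rloop S op e" "a \<in> S \<times> S" "b \<in> S \<times> S"
  shows "rloop.rdiv (S \<times> S) (prod_op op) b a
    = (rloop.rdiv S op (fst b) (fst a), rloop.rdiv S op (snd b) (snd a))"
proof -
  interpret rloop S op e by fact
  interpret P: rloop "S \<times> S" "prod_op op" "(e, e)" using prod_rloop[OF assms(1)] .
  show ?thesis
    by (rule P.rdiv_unique[symmetric])
      (use assms(2,3) rdiv[of "fst a" "fst b"] rdiv[of "snd a" "snd b"] in \<open>auto simp: prod_op_def\<close>)
qed

context rloop
begin

lemma prod_rloop_self: "rloop (S \<times> S) (prod_op op) (e, e)"
  by (rule prod_rloop) (rule rloop_axioms)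

lemma cong_sub: "congruence S op e \<alpha> \<Longrightarrow> \<alpha> \<subseteq> S \<times> S"
  by (auto simp: congruence_def equiv_def)

lemma cong_refl: "congruence S op e \<alpha> \<Longrightarrow> x \<in> S \<Longrightarrow> (x, x) \<in> \<alpha>"
  by (auto simp: congruence_def equiv_def refl_on_def)

lemma cong_sym: "congruence S op e \<alpha> \<Longrightarrow> (x, y) \<in> \<alpha> \<Longrightarrow> (y, x) \<in> \<alpha>"
  by (auto simp: congruence_def equiv_def sym_def)

lemma cong_trans: "congruence S op e \<alpha> \<Longrightarrow> (x, y) \<in> \<alpha> \<Longrightarrow> (y, z) \<in> \<alpha> \<Longrightarrow> (x, z) \<in> \<alpha>"
  unfolding congruence_def equiv_def trans_def by blast

lemma cong_op: assumes "congruence S op e \<alpha>" "(x, y) \<in> \<alpha>" "(u, v) \<in> \<alpha>"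
  shows "(op x u, op y v) \<in> \<alpha>"
proof -
  have "prod_op op (x, y) (u, v) \<in> \<alpha>" using assms by (simp add: congruence_def right_loop_def)
  then show ?thesis by (simp add: prod_op_def)
qed

lemma cong_rloop: "congruence S op e \<alpha> \<Longrightarrow> rloop \<alpha> (prod_op op) (e, e)"
  by (simp add: congruence_def rloop_def)

lemma cong_rloop_rdiv: assumes A: "congruence S op e \<alpha>" and p: "p \<in> \<alpha>" and q: "q \<in> \<alpha>"
  shows "rloop.rdiv \<alpha> (prod_op op) q p = (rdiv (fst q) (fst p), rdiv (snd q) (snd p))"
proof -
  interpret P: rloop "S \<times> S" "prod_op op" "(e, e)" by (rule prod_rloop_self)
  have sub: "\<alpha> \<subseteq> S \<times> S" using cong_sub[OF A] .
  have "rloop.rdiv \<alpha> (prod_op op) q p = P.rdiv q p"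
    using P.sub_rdiv[OF sub _ p q] A by (simp add: congruence_def)
  also have "\<dots> = (rdiv (fst q) (fst p), rdiv (snd q) (snd p))"
    using prod_rdiv[OF rloop_axioms, of p q] sub p q by auto
  finally show ?thesis .
qed

lemma cong_rdiv: assumes A: "congruence S op e \<alpha>" and xy: "(x, y) \<in> \<alpha>" and uv: "(u, v) \<in> \<alpha>"
  shows "(rdiv x u, rdiv y v) \<in> \<alpha>"
  using rloop.rdiv(1)[OF cong_rloop[OF A] uv xy] cong_rloop_rdiv[OF A uv xy] by simp

lemma congruenceI:
  assumes eq: "equiv S \<alpha>"
    and mult: "\<And>x y u v. (x, y) \<in> \<alpha> \<Longrightarrow> (u, v) \<in> \<alpha> \<Longrightarrow> (op x u, op y v) \<in> \<alpha>"
    and div: "\<And>x y u v. (x, y) \<in> \<alpha> \<Longrightarrow> (u, v) \<in> \<alpha> \<Longrightarrow> (rdiv x u, rdiv y v) \<in> \<alpha>"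
  shows "congruence S op e \<alpha>"
proof -
  interpret P: rloop "S \<times> S" "prod_op op" "(e, e)" by (rule prod_rloop_self)
  have sub: "\<alpha> \<subseteq> S \<times> S" using eq by (simp add: equiv_def refl_on_def)
  have "right_loop \<alpha> (prod_op op) (e, e)"
  proof (rule P.sub_rl[OF sub])
    show "(e, e) \<in> \<alpha>" using eq e_in by (simp add: equiv_def refl_on_def)
    show "prod_op op p q \<in> \<alpha>" if "p \<in> \<alpha>" "q \<in> \<alpha>" for p q
      using mult[of "fst p" "snd p" "fst q" "snd q"] that by (simp add: prod_op_def)
    show "P.rdiv q p \<in> \<alpha>" if "p \<in> \<alpha>" "q \<in> \<alpha>" for p q
    proof -
      have "p \<in> S \<times> S" "q \<in> S \<times> S" using that sub by auto
      then show ?thesis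
        using div[of "fst q" "snd q" "fst p" "snd p"] that prod_rdiv[OF rloop_axioms, of p q] by simp
    qed
  qed
  with eq show ?thesis by (simp add: congruence_def)
qed

lemma cong_cancel: assumes A: "congruence S op e \<alpha>" and "X \<in> S" "Y \<in> S" "a \<in> S"
  and "(op X a, op Y a) \<in> \<alpha>" shows "(X, Y) \<in> \<alpha>"
  using cong_rdiv[OF A assms(5) cong_refl[OF A assms(4)]] rdiv_op assms(2-4) by simp

lemma cong_rmult_iff: assumes A: "congruence S op e \<alpha>" and "x \<in> S" "x' \<in> S" "a \<in> S"
  shows "(op x a, op x' a) \<in> \<alpha> \<longleftrightarrow> (x, x') \<in> \<alpha>"
  using cong_cancel[OF A assms(2-4)] cong_op[OF A _ cong_refl[OF A assms(4)]] by blast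

lemma cong_char: assumes A: "congruence S op e \<alpha>" and x: "x \<in> S" and y: "y \<in> S"
  shows "(x, y) \<in> \<alpha> \<longleftrightarrow> (e, rdiv x y) \<in> \<alpha>"
proof
  assume "(x, y) \<in> \<alpha>"
  from cong_rdiv[OF A this cong_refl[OF A y]] show "(e, rdiv x y) \<in> \<alpha>"
    using rdiv_self[OF y] cong_sym[OF A] by simp
next
  assume "(e, rdiv x y) \<in> \<alpha>"
  from cong_op[OF A cong_sym[OF A this] cong_refl[OF A y]] show "(x, y) \<in> \<alpha>"
    using rdiv[OF y x] y by simp
qed

lemma cong_eq: assumes A: "congruence S op e \<alpha>" and B: "congruence S op e \<beta>"
  and eq: "\<alpha> `` {e} = \<beta> `` {e}" shows "\<alpha> = \<beta>"
proof -
  have "(x, y) \<in> \<alpha> \<longleftrightarrow> (x, y) \<in> \<beta>" for x y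
  proof (cases "x \<in> S \<and> y \<in> S")
    case True
    have "(e, rdiv x y) \<in> \<alpha> \<longleftrightarrow> (e, rdiv x y) \<in> \<beta>" using eq by blast
    then show ?thesis using cong_char[OF A] cong_char[OF B] True by simp
  next
    case False
    then show ?thesis using cong_sub[OF A] cong_sub[OF B] by auto
  qed
  then show ?thesis by auto
qed

lemma inv_cong_eq: assumes "congruence S op e \<alpha>" shows "inv_cong S op e (\<alpha> `` {e}) = \<alpha>"
  unfolding inv_cong_def by (rule the_equality) (use assms cong_eq in auto)

end

section \<open>The center\<close>

context rloop
begin

definition zeta :: "'a rel" where
  "zeta = {(x, y). x \<in> S \<and> y \<in> S \<and> (\<exists>c\<in>Cen. x = op c y)}"

lemma zetaI: "c \<in> Cen \<Longrightarrow> y \<in> S \<Longrightarrow> (op c y, y) \<in> zeta"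
  using Cen_S by (auto simp: zeta_def)

lemma zetaE: assumes "(x, y) \<in> zeta" obtains c where "c \<in> Cen" "y \<in> S" "x = op c y"
  using assms by (auto simp: zeta_def)

text \<open>\<open>zeta\<close> is a congruence because \<open>Cen\<close> is closed under products and inverses and
  central factors can be collected in products and quotients.\<close>

lemma zeta_cong: "congruence S op e zeta"
proof (rule congruenceI)
  show "equiv S zeta"
  proof (rule equivI)
    show "zeta \<subseteq> S \<times> S" by (auto simp: zeta_def)
    show "refl_on S zeta" by (rule refl_onI) (use zetaI[OF e_Cen] in \<open>auto simp: zeta_def\<close>)
    show "sym zeta"
    proof (rule symI)
      fix x y assume "(x, y) \<in> zeta"
      then obtain c where c: "c \<in> Cen" "y \<in> S" "x = op c y" by (rule zetaE)
      then have "(op (cinv c) x, x) \<in> zeta" using zetaI[OF cinv_Cen[OF c(1)]] Cen_S by simp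
      then show "(y, x) \<in> zeta" using cinv_left[OF c(1,2)] c(3) by simp
    qed
    show "trans zeta"
    proof (rule transI)
      fix x y z assume "(x, y) \<in> zeta" "(y, z) \<in> zeta"
      then obtain c d where c: "c \<in> Cen" "x = op c y" and d: "d \<in> Cen" "z \<in> S" "y = op d z"
        by (metis zetaE)
      have "x = op (op c d) z" using CenD(3)[OF c(1) Cen_S[OF d(1)] d(2)] c(2) d(3) by simp
      then show "(x, z) \<in> zeta" using zetaI[OF Cen_mult[OF c(1) d(1)] d(2)] by simp
    qed
  qed
next
  fix x y u v assume "(x, y) \<in> zeta" "(u, v) \<in> zeta"
  then obtain c d where c: "c \<in> Cen" "y \<in> S" "x = op c y" and d: "d \<in> Cen" "v \<in> S" "u = op d v"
    by (metis zetaE)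
  show "(op x u, op y v) \<in> zeta"
    using zetaI[OF Cen_mult[OF c(1) d(1)] op_in[OF c(2) d(2)]] Cen_prod[OF c(1) d(1) c(2) d(2)] c d by simp
  show "(rdiv x u, rdiv y v) \<in> zeta"
    using zetaI[OF Cen_mult[OF c(1) cinv_Cen[OF d(1)]] rdiv(1)[OF d(2) c(2)]]
      Cen_div[OF d(1) c(1) d(2) c(2)] c d by simp
qed

text \<open>The witness \<open>(S \<times> S | zeta)\<close> of the centralization: pairs in \<open>zeta\<close> with the same label.\<close>

definition Rz :: "('a \<times> 'a) rel" where
  "Rz = {((op c y, y), (op c v, v)) | c y v. c \<in> Cen \<and> y \<in> S \<and> v \<in> S}"

lemma RzI: "c \<in> Cen \<Longrightarrow> y \<in> S \<Longrightarrow> v \<in> S \<Longrightarrow> ((op c y, y), (op c v, v)) \<in> Rz"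
  by (auto simp: Rz_def)

lemma RzE: assumes "((x, y), (u, v)) \<in> Rz"
  obtains c where "c \<in> Cen" "y \<in> S" "v \<in> S" "x = op c y" "u = op c v"
  using assms by (auto simp: Rz_def)

lemma Rz_swap: assumes "((x, y), (u, v)) \<in> Rz" shows "((y, x), (v, u)) \<in> Rz"
proof -
  obtain c where c: "c \<in> Cen" "y \<in> S" "v \<in> S" "x = op c y" "u = op c v" using assms by (rule RzE)
  have "((op (cinv c) x, x), (op (cinv c) u, u)) \<in> Rz"
    using RzI[OF cinv_Cen[OF c(1)]] c Cen_S by simp
  then show ?thesis using cinv_left c by simp
qed

lemma Rz_compose: assumes "((x, y), (u, v)) \<in> Rz" "((y, z), (v, w)) \<in> Rz" shows "((x, z), (u, w)) \<in> Rz"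
proof -
  obtain c where c: "c \<in> Cen" "x = op c y" "u = op c v" using assms(1) by (rule RzE)
  obtain d where d: "d \<in> Cen" "z \<in> S" "w \<in> S" "y = op d z" "v = op d w" using assms(2) by (rule RzE)
  have "x = op (op c d) z" "u = op (op c d) w"
    using CenD(3)[OF c(1) Cen_S[OF d(1)] d(2)] CenD(3)[OF c(1) Cen_S[OF d(1)] d(3)] c d by simp_all
  then show ?thesis using RzI[OF Cen_mult[OF c(1) d(1)] d(2,3)] by simp
qed

lemma Rz_cong: "congruence zeta (prod_op op) (e, e) Rz"
proof -
  interpret Z: rloop zeta "prod_op op" "(e, e)" by (rule cong_rloop[OF zeta_cong])
  show ?thesis
  proof (rule Z.congruenceI)
    show "equiv zeta Rz"
    proof (rule equivI)
      show "Rz \<subseteq> zeta \<times> zeta" by (auto simp: Rz_def intro: zetaI)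
      show "refl_on zeta Rz" by (rule refl_onI) (auto simp: Rz_def zeta_def intro: zetaI)
      show "sym Rz" by (rule symI) (auto simp: Rz_def intro: RzI)
      show "trans Rz"
      proof (rule transI)
        fix p q r assume "(p, q) \<in> Rz" "(q, r) \<in> Rz"
        then obtain c d y v w where "c \<in> Cen" "d \<in> Cen" "y \<in> S" "v \<in> S" "w \<in> S"
          "p = (op c y, y)" "q = (op c v, v)" "q = (op d v, v)" "r = (op d w, w)"
          by (auto simp: Rz_def)
        then show "(p, r) \<in> Rz" using Cen_rcancel[of c d v] RzI[of c y w] by auto
      qed
    qed
  next
    fix P Q U V assume "(P, Q) \<in> Rz" "(U, V) \<in> Rz"
    then obtain c d y v y' v' where a: "c \<in> Cen" "y \<in> S" "v \<in> S" "P = (op c y, y)" "Q = (op c v, v)"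
      and b: "d \<in> Cen" "y' \<in> S" "v' \<in> S" "U = (op d y', y')" "V = (op d v', v')"
      by (auto simp: Rz_def)
    show "(prod_op op P U, prod_op op Q V) \<in> Rz"
      using RzI[OF Cen_mult[OF a(1) b(1)] op_in[OF a(2) b(2)] op_in[OF a(3) b(3)]] a b
        Cen_prod[OF a(1) b(1) a(2) b(2)] Cen_prod[OF a(1) b(1) a(3) b(3)] by (simp add: prod_op_def)
    have "Z.rdiv P U = (op (op c (cinv d)) (rdiv y y'), rdiv y y')"
      "Z.rdiv Q V = (op (op c (cinv d)) (rdiv v v'), rdiv v v')"
      using cong_rloop_rdiv[OF zeta_cong] Cen_div[OF b(1) a(1) b(2) a(2)] Cen_div[OF b(1) a(1) b(3) a(3)]
        zetaI a b by simp_all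
    then show "(Z.rdiv P U, Z.rdiv Q V) \<in> Rz"
      using RzI[OF Cen_mult[OF a(1) cinv_Cen[OF b(1)]] rdiv(1)[OF b(2) a(2)] rdiv(1)[OF b(3) a(3)]] by simp
  qed
qed

text \<open>The \<open>Rz\<close>-class of a pair \<open>(c y, y)\<close> is the graph of left multiplication by \<open>c\<close>,
  which projects bijectively onto \<open>S\<close>.\<close>

lemma Rz_class_bij: assumes p: "p \<in> zeta" shows "bij_betw fst (Rz `` {p}) ((S \<times> S) `` {fst p})"
proof -
  obtain c y where c: "c \<in> Cen" "y \<in> S" "p = (op c y, y)" using p by (cases p) (auto elim: zetaE)
  have img: "Rz `` {p} = (\<lambda>v. (op c v, v)) ` S"
  proof
    show "Rz `` {p} \<subseteq> (\<lambda>v. (op c v, v)) ` S"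
      using c Cen_rcancel by (auto simp: Rz_def)
    show "(\<lambda>v. (op c v, v)) ` S \<subseteq> Rz `` {p}" using c RzI by auto
  qed
  have "fst ` (\<lambda>v. (op c v, v)) ` S = S"
    using c Cen_S cinv_right[OF c(1)] cinv(1)[OF c(1)] by (auto simp: image_image) (metis image_eqI op_in)
  moreover have "inj_on fst ((\<lambda>v. (op c v, v)) ` S)"
    using Cen_lcancel[OF c(1)] by (auto simp: inj_on_def)
  ultimately show ?thesis using c Cen_S unfolding img bij_betw_def by auto
qed

lemma zeta_central: "centralizes S op e (S \<times> S) zeta"
  unfolding centralizes_def
proof (intro exI[of _ Rz] conjI allI impI ballI)
  show "congruence zeta (prod_op op) (e, e) Rz" by (rule Rz_cong)
  show "(x, u) \<in> S \<times> S" if "((x, y), u, v) \<in> Rz" for x y u v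
    using that Cen_S by (auto simp: Rz_def)
  show "bij_betw fst (Rz `` {p}) ((S \<times> S) `` {fst p})" if "p \<in> zeta" for p
    using Rz_class_bij[OF that] .
  show "((x, x), y, y) \<in> Rz" if "(x, y) \<in> S \<times> S" for x y
    using that RzI[OF e_Cen, of x y] by simp
qed (auto intro: Rz_swap Rz_compose)

text \<open>Let \<open>R\<close> witness that \<open>S \<times> S\<close> centralizes a congruence \<open>\<beta>\<close>, and let
  \<open>(c, e) \<in> \<beta>\<close>.  By (ii) and (iv), a pair \<open>(a, w)\<close> that is \<open>R\<close>-related to \<open>(c, e)\<close> is
  determined by its second component \<open>w\<close>.\<close>

lemma centralizer_determined:
  assumes R: "congruence \<beta> (prod_op op) (e, e) R"
    and bij: "\<forall>p\<in>\<beta>. bij_betw fst (R `` {p}) ((S \<times> S) `` {fst p})"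
    and swap: "\<forall>x y u v. ((x, y), (u, v)) \<in> R \<longrightarrow> ((y, x), (v, u)) \<in> R"
    and ec: "(e, c) \<in> \<beta>"
    and a: "((a, w), (c, e)) \<in> R" and b: "((b, w), (c, e)) \<in> R"
  shows "a = b"
proof -
  have Rsym: "(q, p) \<in> R" if "(p, q) \<in> R" for p q
    using R that unfolding congruence_def equiv_def sym_def by blast
  have "(w, a) \<in> R `` {(e, c)}" "(w, b) \<in> R `` {(e, c)}" using swap a b Rsym by blast+
  moreover have "inj_on fst (R `` {(e, c)})" using bij ec by (auto simp: bij_betw_def)
  ultimately have "(w, a) = (w, b)" by (metis fst_conv inj_onD)
  then show ?thesis by simp
qed

text \<open>Consequently the label \<open>c\<close> of a centralized congruence is central: each defining identity
  of \<open>Cen\<close> arises by multiplying \<open>((c, e), (c, e))\<close> with diagonal pairs \<open>((z, z), (e, e))\<close> in two ways.\<close>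

lemma centralized_label_Cen:
  assumes B: "congruence S op e \<beta>" and C: "centralizes S op e (S \<times> S) \<beta>"
    and cS: "c \<in> S" and ce: "(c, e) \<in> \<beta>"
  shows "c \<in> Cen"
proof -
  obtain R where R: "congruence \<beta> (prod_op op) (e, e) R"
    and bij: "\<forall>p\<in>\<beta>. bij_betw fst (R `` {p}) ((S \<times> S) `` {fst p})"
    and diag: "\<forall>x y. (x, y) \<in> S \<times> S \<longrightarrow> ((x, x), (y, y)) \<in> R"
    and swap: "\<forall>x y u v. ((x, y), (u, v)) \<in> R \<longrightarrow> ((y, x), (v, u)) \<in> R"
    using C unfolding centralizes_def by blast
  note same = centralizer_determined[OF R bij swap cong_sym[OF B ce]]
  have Rmul: "((op x1 x2, op y1 y2), (op u1 u2, op v1 v2)) \<in> R"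
    if "((x1, y1), (u1, v1)) \<in> R" "((x2, y2), (u2, v2)) \<in> R" for x1 y1 u1 v1 x2 y2 u2 v2
  proof -
    have "prod_op (prod_op op) ((x1, y1), (u1, v1)) ((x2, y2), (u2, v2)) \<in> R"
      using R that by (simp add: congruence_def right_loop_def)
    then show ?thesis by (simp add: prod_op_def)
  qed
  have Rcc: "((c, e), (c, e)) \<in> R" using R ce by (auto simp: congruence_def equiv_def refl_on_def)
  have Rd: "((z, z), (e, e)) \<in> R" if "z \<in> S" for z using diag that e_in by auto
  have right: "((op a z, op w z), (c, e)) \<in> R" and left: "((op z a, op z w), (c, e)) \<in> R"
    if "((a, w), (c, e)) \<in> R" "z \<in> S" for a w z
    using Rmul[OF that(1) Rd[OF that(2)]] Rmul[OF Rd[OF that(2)] that(1)] that(2) cS e_in by simp_all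
  have cl: "((op c u, u), (c, e)) \<in> R" and cr: "((op u c, u), (c, e)) \<in> R" if "u \<in> S" for u
    using right[OF Rcc that] left[OF Rcc that] that by simp_all
  show ?thesis unfolding Cen_def
  proof (intro CollectI conjI ballI)
    fix u v assume u: "u \<in> S" and v: "v \<in> S"
    show "op c u = op u c" using same[OF cl[OF u] cr[OF u]] .
    show "op (op c u) v = op c (op u v)" using same[OF right[OF cl[OF u] v] cl] u v by simp
    show "op (op u c) v = op u (op c v)" using same[OF right[OF cr[OF u] v] left[OF cl[OF v] u]] .
    show "op (op u v) c = op u (op v c)" using same[OF cr left[OF cr[OF v] u]] u v by simp
  qed (rule cS)
qed

text \<open>Every congruence centralized by \<open>S \<times> S\<close> is contained in \<open>zeta\<close>, since \<open>x \<beta> y\<close> gives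
  \<open>(x/y) \<beta> e\<close>.\<close>

lemma central_sub_zeta:
  assumes B: "congruence S op e \<beta>" and C: "centralizes S op e (S \<times> S) \<beta>"
  shows "\<beta> \<subseteq> zeta"
proof (clarify)
  fix x y assume xy: "(x, y) \<in> \<beta>"
  then have x: "x \<in> S" and y: "y \<in> S" using cong_sub[OF B] by auto
  define c where "c = rdiv x y"
  have "(c, e) \<in> \<beta>"
    using cong_rdiv[OF B xy cong_refl[OF B y]] rdiv_self[OF y] by (simp add: c_def)
  then have "c \<in> Cen" using centralized_label_Cen[OF B C] rdiv(1)[OF y x] by (simp add: c_def)
  then show "(x, y) \<in> zeta" using zetaI[OF _ y, of c] rdiv(2)[OF y x] by (simp add: c_def)
qed

lemma center_cong_eq: "center_cong S op e = zeta"
  unfolding center_cong_def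
  by (rule the_equality) (use zeta_cong zeta_central central_sub_zeta in blast)+

lemma zeta_class: "zeta `` {e} = Cen"
proof (intro equalityI subsetI)
  fix y assume "y \<in> zeta `` {e}"
  then obtain c where c: "c \<in> Cen" "y \<in> S" "e = op c y" by (auto elim: zetaE)
  have "y = op (cinv c) (op c y)" using cinv_left[OF c(1,2)] by simp
  also have "\<dots> = cinv c" using c(3)[symmetric] cinv(1)[OF c(1)] by simp
  finally show "y \<in> Cen" using cinv_Cen[OF c(1)] by simp
next
  fix y assume y: "y \<in> Cen"
  show "y \<in> zeta `` {e}" using zetaI[OF cinv_Cen[OF y] Cen_S[OF y]] cinv(2)[OF y] by simp
qed

lemma center_eq: "center S op e = Cen"
  by (simp add: center_def center_cong_eq zeta_class)

end

section \<open>Quotients and the upper central series\<close>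

definition centralmod :: "'a set \<Rightarrow> ('a \<Rightarrow> 'a \<Rightarrow> 'a) \<Rightarrow> 'a rel \<Rightarrow> 'a \<Rightarrow> bool" where
  "centralmod S op \<alpha> c \<longleftrightarrow> (\<forall>x\<in>S. \<forall>y\<in>S. (op c x, op x c) \<in> \<alpha> \<and> (op (op c x) y, op c (op x y)) \<in> \<alpha>
     \<and> (op (op x c) y, op x (op c y)) \<in> \<alpha> \<and> (op (op x y) c, op x (op y c)) \<in> \<alpha>)"

locale rcong = rloop +
  fixes \<alpha> :: "'a rel"
  assumes CG: "congruence S op e \<alpha>"
begin

abbreviation cls :: "'a \<Rightarrow> 'a set" where "cls x \<equiv> \<alpha> `` {x}"
abbreviation qop :: "'a set \<Rightarrow> 'a set \<Rightarrow> 'a set" where "qop \<equiv> quot_op op \<alpha>"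

lemma cls_in: "x \<in> S \<Longrightarrow> cls x \<in> S // \<alpha>"
  by (simp add: quotientI)

lemma cls_self: "x \<in> S \<Longrightarrow> x \<in> cls x"
  using cong_refl[OF CG] by simp

lemma cls_eq: "x \<in> S \<Longrightarrow> y \<in> S \<Longrightarrow> cls x = cls y \<longleftrightarrow> (x, y) \<in> \<alpha>"
  using eq_equiv_class_iff[of S \<alpha>] CG by (simp add: congruence_def)

lemma quotient_cases: assumes "A \<in> S // \<alpha>" obtains x where "x \<in> S" "A = cls x"
  using assms by (auto simp: quotient_def)

lemma ball_quotient: "(\<forall>X\<in>S // \<alpha>. P X) \<longleftrightarrow> (\<forall>x\<in>S. P (cls x))"
  by (metis cls_in quotient_cases)

lemma mem_cls: assumes "x \<in> cls a" "a \<in> S" shows "x \<in> S" "cls x = cls a"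
proof -
  have "(a, x) \<in> \<alpha>" using assms by simp
  then show "x \<in> S" using cong_sub[OF CG] by auto
  with \<open>(a, x) \<in> \<alpha>\<close> show "cls x = cls a" using cls_eq assms(2) cong_sym[OF CG] by blast
qed

lemma qop_cls: assumes x: "x \<in> S" and y: "y \<in> S" shows "qop (cls x) (cls y) = cls (op x y)"
proof -
  define a where "a = (SOME a. a \<in> cls x)"
  define b where "b = (SOME b. b \<in> cls y)"
  have a: "a \<in> cls x" unfolding a_def by (rule someI[of _ x]) (rule cls_self[OF x])
  have b: "b \<in> cls y" unfolding b_def by (rule someI[of _ y]) (rule cls_self[OF y])
  have "(op x y, op a b) \<in> \<alpha>" using cong_op[OF CG] a b by simp
  then have "cls (op a b) = cls (op x y)"
    using cls_eq mem_cls(1)[OF a x] mem_cls(1)[OF b y] x y cong_sym[OF CG] by simp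
  then show ?thesis unfolding quot_op_def a_def b_def .
qed

lemma quot_rloop: "rloop (S // \<alpha>) qop (cls e)"
  unfolding rloop_def right_loop_def
proof (intro conjI ballI)
  fix A B assume "A \<in> S // \<alpha>" "B \<in> S // \<alpha>"
  then obtain a b where a: "a \<in> S" "A = cls a" and b: "b \<in> S" "B = cls b" by (metis quotient_cases)
  note r = rdiv[OF a(1) b(1)]
  show "\<exists>!X. X \<in> S // \<alpha> \<and> qop X A = B"
  proof (rule ex1I[of _ "cls (rdiv b a)"])
    show "cls (rdiv b a) \<in> S // \<alpha> \<and> qop (cls (rdiv b a)) A = B"
      using cls_in[OF r(1)] qop_cls[OF r(1) a(1)] r(2) a b by simp
    fix X assume X: "X \<in> S // \<alpha> \<and> qop X A = B"
    then obtain x where x: "x \<in> S" "X = cls x" by (metis quotient_cases)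
    have "cls (op x a) = cls (op (rdiv b a) a)" using X x a b qop_cls[OF x(1) a(1)] r(2) by simp
    then have "(x, rdiv b a) \<in> \<alpha>" using cong_cancel[OF CG x(1) r(1) a(1)] cls_eq x(1) r(1) a(1) by simp
    then show "X = cls (rdiv b a)" using cls_eq[OF x(1) r(1)] x(2) by blast
  qed
qed (auto elim!: quotient_cases simp: cls_in e_in qop_cls)

sublocale Q: rloop "S // \<alpha>" qop "cls e"
  by (rule quot_rloop)

lemma Q_rdiv: "x \<in> S \<Longrightarrow> y \<in> S \<Longrightarrow> Q.rdiv (cls x) (cls y) = cls (rdiv x y)"
  by (rule Q.rdiv_unique[symmetric]) (use cls_in rdiv[of y x] qop_cls in auto)

lemma Q_Cen: assumes c: "c \<in> S" shows "cls c \<in> Q.Cen \<longleftrightarrow> centralmod S op \<alpha> c"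
  using c by (simp add: Q.Cen_def ball_quotient qop_cls cls_eq cls_in centralmod_def)

lemma Union_Q_Cen: "\<Union> Q.Cen = {c \<in> S. centralmod S op \<alpha> c}"
proof (intro equalityI subsetI)
  fix x assume "x \<in> \<Union> Q.Cen"
  then obtain A where A: "A \<in> Q.Cen" "x \<in> A" by blast
  obtain a where a: "a \<in> S" "A = cls a" using Q.Cen_S[OF A(1)] by (rule quotient_cases)
  have "x \<in> S" "cls x = A" using mem_cls A(2) a by auto
  then show "x \<in> {c \<in> S. centralmod S op \<alpha> c}" using Q_Cen A(1) by auto
qed (use Q_Cen cls_self in blast)

definition pullback :: "'a set rel \<Rightarrow> 'a rel" where
  "pullback \<gamma> = {(x, y). x \<in> S \<and> y \<in> S \<and> (cls x, cls y) \<in> \<gamma>}"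

lemma pullback_cong: assumes G: "congruence (S // \<alpha>) qop (cls e) \<gamma>"
  shows "congruence S op e (pullback \<gamma>)"
proof (rule congruenceI)
  show "equiv S (pullback \<gamma>)"
  proof (rule equivI)
    show "refl_on S (pullback \<gamma>)"
      by (rule refl_onI) (auto simp: pullback_def intro: Q.cong_refl[OF G] cls_in)
    show "sym (pullback \<gamma>)"
      by (rule symI) (auto simp: pullback_def intro: Q.cong_sym[OF G])
    show "trans (pullback \<gamma>)"
      by (rule transI) (auto simp: pullback_def intro: Q.cong_trans[OF G])
  qed (auto simp: pullback_def)
  fix x y u v assume "(x, y) \<in> pullback \<gamma>" "(u, v) \<in> pullback \<gamma>"
  then have S: "x \<in> S" "y \<in> S" "u \<in> S" "v \<in> S"
    and xy: "(cls x, cls y) \<in> \<gamma>" and uv: "(cls u, cls v) \<in> \<gamma>"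
    by (auto simp: pullback_def)
  have "(qop (cls x) (cls u), qop (cls y) (cls v)) \<in> \<gamma>" by (rule Q.cong_op[OF G xy uv])
  then show "(op x u, op y v) \<in> pullback \<gamma>" using S by (simp add: pullback_def qop_cls)
  have "(Q.rdiv (cls x) (cls u), Q.rdiv (cls y) (cls v)) \<in> \<gamma>" by (rule Q.cong_rdiv[OF G xy uv])
  then show "(rdiv x u, rdiv y v) \<in> pullback \<gamma>" using S by (simp add: pullback_def Q_rdiv rdiv)
qed

lemma center_quotient: "\<Union> (center (S // \<alpha>) qop (cls e)) = {c \<in> S. centralmod S op \<alpha> c}"
  using Q.center_eq Union_Q_Cen by simp

lemma center_quotient_cong:
  "congruence S op e (pullback Q.zeta) \<and> pullback Q.zeta `` {e} = {c \<in> S. centralmod S op \<alpha> c}"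
  using pullback_cong[OF Q.zeta_cong] Q.zeta_class Q_Cen e_in cls_in
  by (auto simp: pullback_def)

end

context rloop
begin

lemma upper_central_Suc:
  assumes "congruence S op e \<alpha>" "\<alpha> `` {e} = upper_central S op e i"
  shows "upper_central S op e (Suc i) = {c \<in> S. centralmod S op \<alpha> c}"
proof -
  interpret rcong S op e \<alpha> by unfold_locales (rule assms(1))
  have "inv_cong S op e (upper_central S op e i) = \<alpha>"
    using inv_cong_eq[OF assms(1)] unfolding assms(2) .
  then have "upper_central S op e (Suc i) = \<Union> (center (S // \<alpha>) qop (cls e))"
    by (simp only: upper_central.simps Let_def)
  then show ?thesis by (simp only: center_quotient)
qed

lemma upper_central_cong: "\<exists>\<alpha>. congruence S op e \<alpha> \<and> \<alpha> `` {e} = upper_central S op e i"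
proof (induction i)
  case 0
  have "congruence S op e (Id_on S)"
    by (rule congruenceI) (auto simp: equiv_def refl_on_def sym_def trans_def rdiv)
  then show ?case using e_in by auto
next
  case (Suc i)
  then obtain \<alpha> where A: "congruence S op e \<alpha>" "\<alpha> `` {e} = upper_central S op e i" by blast
  interpret rcong S op e \<alpha> by unfold_locales (rule A(1))
  show ?case using center_quotient_cong upper_central_Suc[OF A] by metis
qed

definition ucong :: "nat \<Rightarrow> 'a rel" where
  "ucong i = inv_cong S op e (upper_central S op e i)"

lemma ucong: "congruence S op e (ucong i)" "ucong i `` {e} = upper_central S op e i"
proof -
  obtain \<alpha> where a: "congruence S op e \<alpha>" "\<alpha> `` {e} = upper_central S op e i"
    using upper_central_cong by blast
  then have "ucong i = \<alpha>" using inv_cong_eq[OF a(1)] by (simp add: ucong_def)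
  then show "congruence S op e (ucong i)" "ucong i `` {e} = upper_central S op e i" using a by auto
qed

lemma ucong_Suc: "ucong (Suc i) `` {e} = {c \<in> S. centralmod S op (ucong i) c}"
  using ucong(2)[of "Suc i"] upper_central_Suc[OF ucong] by simp

end

lemma BijGroup_mult_apply: "g \<in> Bij S \<Longrightarrow> h \<in> Bij S \<Longrightarrow> x \<in> S \<Longrightarrow> (g \<otimes>\<^bsub>BijGroup S\<^esub> h) x = g (h x)"
  by (simp add: BijGroup_def compose_def)

lemma Bij_inv_apply: assumes g: "g \<in> Bij S" and y: "y \<in> S"
  shows "(inv\<^bsub>BijGroup S\<^esub> g) y \<in> S" "g ((inv\<^bsub>BijGroup S\<^esub> g) y) = y"
proof -
  have "g ` S = S" using g by (simp add: Bij_def bij_betw_def)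
  then show "(inv\<^bsub>BijGroup S\<^esub> g) y \<in> S" "g ((inv\<^bsub>BijGroup S\<^esub> g) y) = y"
    using inv_BijGroup[OF g] y inv_into_into[of y g S] f_inv_into_f[of y g S] by auto
qed

lemma BijGroup_commutator_apply:
  assumes a: "a \<in> Bij S" and b: "b \<in> Bij S" and x: "x \<in> S"
  obtains v where "v \<in> S" "b (a v) = x"
    "(a \<otimes>\<^bsub>BijGroup S\<^esub> b \<otimes>\<^bsub>BijGroup S\<^esub> inv\<^bsub>BijGroup S\<^esub> a \<otimes>\<^bsub>BijGroup S\<^esub> inv\<^bsub>BijGroup S\<^esub> b) x = a (b v)"
proof
  let ?B = "BijGroup S"
  have inv: "inv\<^bsub>?B\<^esub> a \<in> Bij S" "inv\<^bsub>?B\<^esub> b \<in> Bij S"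
    using a b group.inv_closed[OF group_BijGroup] by (auto simp: BijGroup_def)
  have ab: "a \<otimes>\<^bsub>?B\<^esub> b \<in> Bij S" "a \<otimes>\<^bsub>?B\<^esub> b \<otimes>\<^bsub>?B\<^esub> inv\<^bsub>?B\<^esub> a \<in> Bij S"
    using a b inv by (simp_all add: BijGroup_def compose_Bij)
  note b' = Bij_inv_apply[OF b x]
  show "(inv\<^bsub>?B\<^esub> a) ((inv\<^bsub>?B\<^esub> b) x) \<in> S" "b (a ((inv\<^bsub>?B\<^esub> a) ((inv\<^bsub>?B\<^esub> b) x))) = x"
    using Bij_inv_apply[OF a b'(1)] b' by simp_all
  show "(a \<otimes>\<^bsub>?B\<^esub> b \<otimes>\<^bsub>?B\<^esub> inv\<^bsub>?B\<^esub> a \<otimes>\<^bsub>?B\<^esub> inv\<^bsub>?B\<^esub> b) x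
      = a (b ((inv\<^bsub>?B\<^esub> a) ((inv\<^bsub>?B\<^esub> b) x)))"
    using BijGroup_mult_apply[OF ab(2) inv(2) x] BijGroup_mult_apply[OF ab(1) inv(1) b'(1)]
      BijGroup_mult_apply[OF a b Bij_inv_apply(1)[OF a b'(1)]] by simp
qed

section \<open>Permutations compatible with a congruence\<close>

context rloop
begin

definition compatible :: "'a rel \<Rightarrow> ('a \<Rightarrow> 'a) \<Rightarrow> bool" where
  "compatible \<alpha> g \<longleftrightarrow> g \<in> Bij S \<and> (\<forall>x\<in>S. \<forall>x'\<in>S. (g x, g x') \<in> \<alpha> \<longleftrightarrow> (x, x') \<in> \<alpha>)
     \<and> (\<forall>c\<in>S. centralmod S op \<alpha> c \<longrightarrow> (\<forall>x\<in>S. (g (op c x), op c (g x)) \<in> \<alpha>))"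

lemma compatibleD:
  assumes "compatible \<alpha> g"
  shows "g \<in> Bij S" "x \<in> S \<Longrightarrow> g x \<in> S"
    "x \<in> S \<Longrightarrow> x' \<in> S \<Longrightarrow> (g x, g x') \<in> \<alpha> \<longleftrightarrow> (x, x') \<in> \<alpha>"
    "c \<in> S \<Longrightarrow> centralmod S op \<alpha> c \<Longrightarrow> x \<in> S \<Longrightarrow> (g (op c x), op c (g x)) \<in> \<alpha>"
  using assms Bij_imp_funcset by (auto simp: compatible_def)

lemma compatible_mult: assumes A: "congruence S op e \<alpha>" and g: "compatible \<alpha> g" and h: "compatible \<alpha> h"
  shows "compatible \<alpha> (g \<otimes>\<^bsub>BijGroup S\<^esub> h)"
proof -
  note gB = compatibleD(1)[OF g] and hB = compatibleD(1)[OF h]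
  have gh: "g \<otimes>\<^bsub>BijGroup S\<^esub> h \<in> Bij S" "\<And>x. x \<in> S \<Longrightarrow> (g \<otimes>\<^bsub>BijGroup S\<^esub> h) x = g (h x)"
    using gB hB BijGroup_mult_apply[OF gB hB] by (simp_all add: BijGroup_def compose_Bij)
  have cen: "(g (h (op c x)), op c (g (h x))) \<in> \<alpha>" if "c \<in> S" "centralmod S op \<alpha> c" "x \<in> S" for c x
  proof -
    have "(g (h (op c x)), g (op c (h x))) \<in> \<alpha>"
      using compatibleD(3)[OF g] compatibleD(4)[OF h that] compatibleD(2)[OF h] that by simp
    then show ?thesis
      using cong_trans[OF A] compatibleD(4)[OF g that(1,2)] compatibleD(2)[OF h] that(3) by blast
  qed
  show ?thesis using gh cen compatibleD(2,3)[OF g] compatibleD(2,3)[OF h] by (simp add: compatible_def)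
qed

lemma compatible_inv: assumes A: "congruence S op e \<alpha>" and g: "compatible \<alpha> g"
  shows "compatible \<alpha> (inv\<^bsub>BijGroup S\<^esub> g)"
proof -
  define g' where "g' = inv\<^bsub>BijGroup S\<^esub> g"
  note gB = compatibleD(1)[OF g]
  note g' = Bij_inv_apply[OF gB, folded g'_def]
  have "g' \<in> Bij S" using inv_BijGroup[OF gB] restrict_inv_into_Bij[OF gB] by (simp add: g'_def)
  moreover have "(g' s, g' s') \<in> \<alpha> \<longleftrightarrow> (s, s') \<in> \<alpha>" if "s \<in> S" "s' \<in> S" for s s'
    using compatibleD(3)[OF g g'(1)[OF that(1)] g'(1)[OF that(2)]] g'(2) that by simp
  moreover have "(g' (op c s), op c (g' s)) \<in> \<alpha>"
    if c: "c \<in> S" "centralmod S op \<alpha> c" and s: "s \<in> S" for c s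
  proof -
    have "(g (op c (g' s)), op c s) \<in> \<alpha>" using compatibleD(4)[OF g c g'(1)[OF s]] g'(2)[OF s] by simp
    then have "(g (op c (g' s)), g (g' (op c s))) \<in> \<alpha>" using g'(2) c s by simp
    then show ?thesis using compatibleD(3)[OF g] g'(1) c s cong_sym[OF A] by simp
  qed
  ultimately show ?thesis by (simp add: compatible_def g'_def)
qed

lemma compatible_subgroup: assumes A: "congruence S op e \<alpha>"
  shows "subgroup {g. compatible \<alpha> g} (BijGroup S)"
proof (rule subgroup.intro)
  show "{g. compatible \<alpha> g} \<subseteq> carrier (BijGroup S)" by (auto simp: compatible_def BijGroup_def)
  show "\<one>\<^bsub>BijGroup S\<^esub> \<in> {g. compatible \<alpha> g}"
    using id_Bij cong_refl[OF A] by (simp add: compatible_def BijGroup_def)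
  show "g \<otimes>\<^bsub>BijGroup S\<^esub> h \<in> {g. compatible \<alpha> g}" if "g \<in> {g. compatible \<alpha> g}" "h \<in> {g. compatible \<alpha> g}"
    for g h using compatible_mult[OF A] that by simp
  show "inv\<^bsub>BijGroup S\<^esub> g \<in> {g. compatible \<alpha> g}" if "g \<in> {g. compatible \<alpha> g}" for g
    using compatible_inv[OF A] that by simp
qed

end

section \<open>Torsion maps\<close>

context rloop
begin

lemma torsion_map: assumes y: "y \<in> S" and z: "z \<in> S" and x: "x \<in> S"
  shows "torsion_map S op y z x \<in> S" "op (torsion_map S op y z x) (op y z) = op (op x y) z"
  using rdiv[of "op y z" "op (op x y) z"] x y z by (simp_all add: torsion_map_def rdiv_def)

lemma torsion_map_Bij: assumes y: "y \<in> S" and z: "z \<in> S" shows "torsion_map S op y z \<in> Bij S"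
proof -
  let ?t = "torsion_map S op y z"
  note t = torsion_map[OF y z]
  have "inj_on ?t S"
  proof (rule inj_onI)
    fix x x' assume x: "x \<in> S" and x': "x' \<in> S" and eq: "?t x = ?t x'"
    then have "op (op x y) z = op (op x' y) z" using t(2)[OF x] t(2)[OF x'] by simp
    then show "x = x'" using rcancel[OF op_in[OF x y] op_in[OF x' y] z] rcancel[OF x x' y] by simp
  qed
  moreover have "?t ` S = S"
  proof (intro equalityI subsetI)
    fix w assume w: "w \<in> S"
    define x where "x = rdiv (rdiv (op w (op y z)) z) y"
    have x: "x \<in> S" "op (op x y) z = op w (op y z)"
      using rdiv[OF z, of "op w (op y z)"] rdiv[OF y, of "rdiv (op w (op y z)) z"] w y z
      by (simp_all add: x_def)
    then have "?t x = w" using rcancel[OF t(1)[OF x(1)] w op_in[OF y z]] t(2)[OF x(1)] by simp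
    then show "w \<in> ?t ` S" using x(1) by force
  qed (use t(1) in auto)
  ultimately show ?thesis by (simp add: Bij_def bij_betw_def torsion_map_def)
qed

text \<open>Torsion maps are compatible with every congruence; the key computation is
  \<open>f(c x)(y z) = ((c x) y) z \<equiv> c ((x y) z) = c (f(x)(y z)) \<equiv> (c f(x))(y z)\<close> modulo \<open>\<alpha>\<close>.\<close>

lemma torsion_map_compatible: assumes A: "congruence S op e \<alpha>" and y: "y \<in> S" and z: "z \<in> S"
  shows "compatible \<alpha> (torsion_map S op y z)"
proof -
  let ?t = "torsion_map S op y z"
  note t = torsion_map[OF y z]
  have yz: "op y z \<in> S" using y z by simp
  have iff: "(?t x, ?t x') \<in> \<alpha> \<longleftrightarrow> (x, x') \<in> \<alpha>" if x: "x \<in> S" "x' \<in> S" for x x'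
  proof -
    have "(?t x, ?t x') \<in> \<alpha> \<longleftrightarrow> (op (?t x) (op y z), op (?t x') (op y z)) \<in> \<alpha>"
      using cong_rmult_iff[OF A t(1) t(1) yz] x by simp
    also have "\<dots> \<longleftrightarrow> (op (op x y) z, op (op x' y) z) \<in> \<alpha>" using t(2) x by simp
    also have "\<dots> \<longleftrightarrow> (op x y, op x' y) \<in> \<alpha>" using cong_rmult_iff[OF A _ _ z] x y by simp
    also have "\<dots> \<longleftrightarrow> (x, x') \<in> \<alpha>" using cong_rmult_iff[OF A x y] .
    finally show ?thesis .
  qed
  have cen: "(?t (op c x), op c (?t x)) \<in> \<alpha>" if c: "c \<in> S" "centralmod S op \<alpha> c" and x: "x \<in> S" for c x
  proof -
    have "(op (op (op c x) y) z, op (op c (op x y)) z) \<in> \<alpha>"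
      using cong_op[OF A _ cong_refl[OF A z]] c x y unfolding centralmod_def by blast
    moreover have "(op (op c (op x y)) z, op c (op (op x y) z)) \<in> \<alpha>"
      using c x y z unfolding centralmod_def by blast
    moreover have "(op c (op (?t x) (op y z)), op (op c (?t x)) (op y z)) \<in> \<alpha>"
      using c t(1)[OF x] yz cong_sym[OF A] unfolding centralmod_def by blast
    ultimately have "(op (?t (op c x)) (op y z), op (op c (?t x)) (op y z)) \<in> \<alpha>"
      using t(2)[OF op_in[OF c(1) x]] t(2)[OF x] cong_trans[OF A] by metis
    then show ?thesis using cong_rmult_iff[OF A t(1) op_in[OF c(1) t(1)] yz] c x by simp
  qed
  show ?thesis using torsion_map_Bij[OF y z] iff cen by (simp add: compatible_def)
qed

lemma group_torsion_subgroup: "subgroup (group_torsion S op) (BijGroup S)"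
  unfolding group_torsion_def
  by (rule group.generate_is_subgroup[OF group_BijGroup]) (auto simp: BijGroup_def torsion_map_Bij)

lemma group_torsion_compatible: assumes A: "congruence S op e \<alpha>" and g: "g \<in> group_torsion S op"
  shows "compatible \<alpha> g"
proof -
  have "group_torsion S op \<subseteq> {g. compatible \<alpha> g}"
    unfolding group_torsion_def
    by (rule group.generate_subgroup_incl[OF group_BijGroup _ compatible_subgroup[OF A]])
      (use torsion_map_compatible[OF A] in blast)
  then show ?thesis using g by blast
qed

section \<open>The filtration of the group torsion\<close>

text \<open>The permutations acting trivially on \<open>S/\<alpha>\<close>; the filtration of \<open>G\<^sub>S\<close> consists of the
  subgroups \<open>K(\<alpha>) = G\<^sub>S \<inter> fix_mod \<alpha>\<close>.\<close>

definition fix_mod :: "'a rel \<Rightarrow> ('a \<Rightarrow> 'a) set" where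
  "fix_mod \<alpha> = {g \<in> Bij S. \<forall>x\<in>S. (g x, x) \<in> \<alpha>}"

lemma fix_mod_subgroup: assumes A: "congruence S op e \<alpha>" shows "subgroup (fix_mod \<alpha>) (BijGroup S)"
proof (rule subgroup.intro)
  fix g h assume g: "g \<in> fix_mod \<alpha>" and h: "h \<in> fix_mod \<alpha>"
  then have gB: "g \<in> Bij S" and hB: "h \<in> Bij S" by (simp_all add: fix_mod_def)
  have "((g \<otimes>\<^bsub>BijGroup S\<^esub> h) x, x) \<in> \<alpha>" if x: "x \<in> S" for x
  proof -
    have "(g (h x), h x) \<in> \<alpha>" "(h x, x) \<in> \<alpha>"
      using g h x Bij_imp_funcset[OF hB] by (auto simp: fix_mod_def)
    then show ?thesis using cong_trans[OF A] BijGroup_mult_apply[OF gB hB x] by simp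
  qed
  moreover have "g \<otimes>\<^bsub>BijGroup S\<^esub> h \<in> Bij S" using gB hB by (simp add: BijGroup_def compose_Bij)
  ultimately show "g \<otimes>\<^bsub>BijGroup S\<^esub> h \<in> fix_mod \<alpha>" by (simp add: fix_mod_def)
next
  fix g assume g: "g \<in> fix_mod \<alpha>"
  then have gB: "g \<in> Bij S" by (simp add: fix_mod_def)
  have "((inv\<^bsub>BijGroup S\<^esub> g) x, x) \<in> \<alpha>" if x: "x \<in> S" for x
  proof -
    have "(g ((inv\<^bsub>BijGroup S\<^esub> g) x), (inv\<^bsub>BijGroup S\<^esub> g) x) \<in> \<alpha>"
      using g Bij_inv_apply(1)[OF gB x] by (simp add: fix_mod_def)
    then show ?thesis using Bij_inv_apply(2)[OF gB x] cong_sym[OF A] by simp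
  qed
  moreover have "inv\<^bsub>BijGroup S\<^esub> g \<in> Bij S"
    using group.inv_closed[OF group_BijGroup] gB by (simp add: BijGroup_def)
  ultimately show "inv\<^bsub>BijGroup S\<^esub> g \<in> fix_mod \<alpha>" by (simp add: fix_mod_def)
next
  show "fix_mod \<alpha> \<subseteq> carrier (BijGroup S)" by (auto simp: fix_mod_def BijGroup_def)
  show "\<one>\<^bsub>BijGroup S\<^esub> \<in> fix_mod \<alpha>" using id_Bij cong_refl[OF A] by (simp add: fix_mod_def BijGroup_def)
qed

text \<open>If \<open>\<alpha>'\<close> is central modulo \<open>\<alpha>\<close>, then elements of the group torsion acting trivially
  on \<open>S/\<alpha>'\<close> commute modulo \<open>\<alpha>\<close>: writing \<open>a v = c v\<close>, \<open>b v = d v\<close> with \<open>c, d\<close> central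
  modulo \<open>\<alpha>\<close>, compatibility gives \<open>a (b v) \<equiv> d (c v) \<equiv> c (d v) \<equiv> b (a v)\<close>.\<close>

lemma torsion_commute_mod:
  assumes A: "congruence S op e \<alpha>" and A': "congruence S op e \<alpha>'"
    and Z: "\<alpha>' `` {e} \<subseteq> {c \<in> S. centralmod S op \<alpha> c}"
    and a: "a \<in> group_torsion S op \<inter> fix_mod \<alpha>'" and b: "b \<in> group_torsion S op \<inter> fix_mod \<alpha>'"
    and v: "v \<in> S"
  shows "(a (b v), b (a v)) \<in> \<alpha>"
proof -
  have ca: "compatible \<alpha> a" and cb: "compatible \<alpha> b"
    using group_torsion_compatible[OF A] a b by auto
  have av: "a v \<in> S" "(a v, v) \<in> \<alpha>'" and bv: "b v \<in> S" "(b v, v) \<in> \<alpha>'"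
    using compatibleD(2)[OF ca v] compatibleD(2)[OF cb v] a b v by (auto simp: fix_mod_def)
  define c where "c = rdiv (a v) v"
  define d where "d = rdiv (b v) v"
  have c: "c \<in> S" "op c v = a v" "centralmod S op \<alpha> c"
    using rdiv[OF v av(1)] cong_char[OF A' av(1) v] av(2) Z by (auto simp: c_def)
  have d: "d \<in> S" "op d v = b v" "centralmod S op \<alpha> d"
    using rdiv[OF v bv(1)] cong_char[OF A' bv(1) v] bv(2) Z by (auto simp: d_def)
  have "(a (b v), op d (a v)) \<in> \<alpha>" using compatibleD(4)[OF ca d(1,3) v] d(2) by simp
  moreover have "(op d (op c v), op (op d c) v) \<in> \<alpha>"
    using d(3) c(1) v cong_sym[OF A] unfolding centralmod_def by blast
  moreover have "(op (op d c) v, op (op c d) v) \<in> \<alpha>"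
    using cong_op[OF A _ cong_refl[OF A v]] d(3) c(1) unfolding centralmod_def by blast
  moreover have "(op (op c d) v, op c (op d v)) \<in> \<alpha>"
    using c(3) d(1) v unfolding centralmod_def by blast
  moreover have "(b (a v), op c (b v)) \<in> \<alpha>" using compatibleD(4)[OF cb c(1,3) v] c(2) by simp
  ultimately show ?thesis using c(2) d(2) cong_trans[OF A] cong_sym[OF A] by metis
qed

lemma derived_fix_mod:
  assumes A: "congruence S op e \<alpha>" and A': "congruence S op e \<alpha>'"
    and Z: "\<alpha>' `` {e} \<subseteq> {c \<in> S. centralmod S op \<alpha> c}"
  shows "derived (BijGroup S) (group_torsion S op \<inter> fix_mod \<alpha>') \<subseteq> group_torsion S op \<inter> fix_mod \<alpha>"
  unfolding derived_def
proof (rule group.generate_subgroup_incl[OF group_BijGroup])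
  let ?B = "BijGroup S" and ?G = "group_torsion S op"
  show "subgroup (?G \<inter> fix_mod \<alpha>) ?B"
    by (rule group.subgroups_Inter_pair[OF group_BijGroup group_torsion_subgroup fix_mod_subgroup[OF A]])
  have sub: "?G \<subseteq> Bij S" using subgroup.subset[OF group_torsion_subgroup] by (simp add: BijGroup_def)
  show "derived_set ?B (?G \<inter> fix_mod \<alpha>') \<subseteq> ?G \<inter> fix_mod \<alpha>"
  proof (clarify)
    fix a b assume a: "a \<in> ?G" "a \<in> fix_mod \<alpha>'" and b: "b \<in> ?G" "b \<in> fix_mod \<alpha>'"
    let ?w = "a \<otimes>\<^bsub>?B\<^esub> b \<otimes>\<^bsub>?B\<^esub> inv\<^bsub>?B\<^esub> a \<otimes>\<^bsub>?B\<^esub> inv\<^bsub>?B\<^esub> b"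
    have Bij: "a \<in> Bij S" "b \<in> Bij S" using a b sub by auto
    have "?w \<in> ?G"
      by (intro subgroup.m_closed[OF group_torsion_subgroup] subgroup.m_inv_closed[OF group_torsion_subgroup] a(1) b(1))
    moreover have "(?w x, x) \<in> \<alpha>" if x: "x \<in> S" for x
    proof -
      obtain v where v: "v \<in> S" "b (a v) = x" "?w x = a (b v)"
        using BijGroup_commutator_apply[OF Bij x] .
      have "(a (b v), b (a v)) \<in> \<alpha>" using torsion_commute_mod[OF A A' Z _ _ v(1)] a b by blast
      then show ?thesis using v(2,3) by simp
    qed
    moreover have "?w \<in> Bij S" using \<open>?w \<in> ?G\<close> sub by blast
    ultimately show "?w \<in> ?G \<inter> fix_mod \<alpha>" by (simp add: fix_mod_def)
  qed
qed

lemma fix_mod_top: assumes A: "congruence S op e \<alpha>" and top: "\<alpha> `` {e} = S"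
  shows "group_torsion S op \<subseteq> fix_mod \<alpha>"
proof
  fix g assume "g \<in> group_torsion S op"
  then have g: "g \<in> Bij S" using subgroup.subset[OF group_torsion_subgroup] by (auto simp: BijGroup_def)
  have "(g x, x) \<in> \<alpha>" if x: "x \<in> S" for x
    using cong_char[OF A Bij_imp_funcset[OF g, THEN funcset_mem, OF x] x] rdiv(1)[OF x] top
      Bij_imp_funcset[OF g, THEN funcset_mem, OF x] by auto
  then show "g \<in> fix_mod \<alpha>" using g by (simp add: fix_mod_def)
qed

lemma fix_mod_bot: assumes A: "congruence S op e \<alpha>" and bot: "\<alpha> `` {e} = {e}"
  shows "fix_mod \<alpha> \<subseteq> {\<one>\<^bsub>BijGroup S\<^esub>}"
proof
  fix g assume g: "g \<in> fix_mod \<alpha>"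
  then have gB: "g \<in> Bij S" by (simp add: fix_mod_def)
  have "g x = x" if x: "x \<in> S" for x
  proof -
    have gx: "g x \<in> S" using Bij_imp_funcset[OF gB] x by auto
    have "rdiv (g x) x = e" using g x cong_char[OF A gx x] bot by (auto simp: fix_mod_def)
    then show ?thesis using rdiv(2)[OF x gx] x by simp
  qed
  then have "g = (\<lambda>x\<in>S. x)" using Bij_imp_extensional[OF gB] by (auto simp: extensional_def)
  then show "g \<in> {\<one>\<^bsub>BijGroup S\<^esub>}" by (simp add: BijGroup_def)
qed

lemma derived_seq_fix_mod:
  assumes top: "upper_central S op e n = S" and "k \<le> n"
  shows "(derived (BijGroup S) ^^ k) (group_torsion S op) \<subseteq> group_torsion S op \<inter> fix_mod (ucong (n - k))"
  using \<open>k \<le> n\<close>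
proof (induction k)
  case 0
  show ?case using fix_mod_top[OF ucong(1)] ucong(2) top by simp
next
  case (Suc k)
  then have IH: "(derived (BijGroup S) ^^ k) (group_torsion S op) \<subseteq> group_torsion S op \<inter> fix_mod (ucong (Suc (n - Suc k)))"
    by (simp add: Suc_diff_Suc)
  have "(derived (BijGroup S) ^^ Suc k) (group_torsion S op)
      \<subseteq> derived (BijGroup S) (group_torsion S op \<inter> fix_mod (ucong (Suc (n - Suc k))))"
    using group.mono_derived[OF group_BijGroup IH] by simp
  also have "\<dots> \<subseteq> group_torsion S op \<inter> fix_mod (ucong (n - Suc k))"
    by (rule derived_fix_mod[OF ucong(1) ucong(1)]) (simp add: ucong_Suc)
  finally show ?case .
qed

lemma derived_seq_group_torsion_trivial:
  assumes "nilpotent_right_loop S op e"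
  shows "\<exists>n. (derived (BijGroup S) ^^ n) (group_torsion S op) = {\<one>\<^bsub>BijGroup S\<^esub>}"
proof -
  obtain n where top: "upper_central S op e n = S" using assms by (auto simp: nilpotent_right_loop_def)
  have bot: "ucong 0 `` {e} = {e}" using ucong(2)[of 0] by simp
  have "(derived (BijGroup S) ^^ n) (group_torsion S op) \<subseteq> {\<one>\<^bsub>BijGroup S\<^esub>}"
    using derived_seq_fix_mod[OF top le_refl] fix_mod_bot[OF ucong(1) bot] by auto
  moreover have "\<one>\<^bsub>BijGroup S\<^esub> \<in> (derived (BijGroup S) ^^ n) (group_torsion S op)"
    by (rule subgroup.one_closed[OF group.exp_of_derived_is_subgroup[OF group_BijGroup group_torsion_subgroup]])
  ultimately show ?thesis by blast
qed

end

lemma (in group) derived_seq_consistent: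
  assumes H: "subgroup H G"
  shows "(derived (G\<lparr>carrier := H\<rparr>) ^^ n) H = (derived G ^^ n) H"
proof (induction n)
  case (Suc n)
  have "(derived G ^^ n) H \<subseteq> H"
    using mono_exp_of_derived[OF subgroup.subset[OF H]] exp_of_derived_is_subgroup[OF H]
      derived_incl[OF _ H]
    by (induction n) auto
  then show ?case using Suc derived_consistent[OF _ H] by simp
qed simp

theorem mainTheorem15:
  fixes S :: "'a set" and op :: "'a \<Rightarrow> 'a \<Rightarrow> 'a" and e :: 'a
  assumes "right_loop S op e"
    and "nilpotent_right_loop S op e"
  shows "solvable ((BijGroup S) \<lparr>carrier := group_torsion S op\<rparr>)"
proof -
  interpret rloop S op e by (rule rloop.intro) (rule assms(1))
  let ?H = "(BijGroup S) \<lparr>carrier := group_torsion S op\<rparr>"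
  have grp: "group ?H" by (rule subgroup.subgroup_is_group[OF group_torsion_subgroup group_BijGroup])
  obtain n where "(derived (BijGroup S) ^^ n) (group_torsion S op) = {\<one>\<^bsub>BijGroup S\<^esub>}"
    using derived_seq_group_torsion_trivial[OF assms(2)] by blast
  then have "(derived ?H ^^ n) (carrier ?H) = {\<one>\<^bsub>?H\<^esub>}"
    using group.derived_seq_consistent[OF group_BijGroup group_torsion_subgroup] by simp
  then show ?thesis using group.solvable_iff_trivial_derived_seq[OF grp] by blast
qed

end
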